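(* Let $\vec{G}$ be a DDMOG of order $n$ with $imb(\vec{G})=1$. Then there exists a DDMOG $\vec{G'}$ of order $n+1$ with $imb(\vec{G'})=0$ that contains $\vec{G}$ as an induced subgraph.
   Context: An oriented graph is a finite digraph without loops such that whenever $(u,v)$ is an arc, $(v,u)$ is not. For a vertex $v$, $N^+(v)=\{u:(u,v)\text{ is an arc}\}$, $N^-(v)=\{u:(v,u)\text{ is an arc}\}$, $imb(v)=|N^+(v)|-|N^-(v)|$, and the imbalance of the oriented graph is $imb(\vec{G})=\max_{v}|imb(v)|$. For a labeling $f$, $wt_f(v)=\sum_{u\in N^+(v)}f(u)-\sum_{u\in N^-(v)}f(u)$. A difference distance magic (DDM) labeling of an oriented graph on $n$ vertices is a bijection $f:V\to\{1,\dots,n\}$ with $wt_f(v)=0$ for all $v$; a DDMOG (difference distance magic oriented graph) is an oriented graph admitting a DDM labeling. *)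

theory Defs
  imports Main
begin

definition oriented_graph :: "'a set \<Rightarrow> ('a \<times> 'a) set \<Rightarrow> bool" where
  "oriented_graph V A \<longleftrightarrow> finite V \<and> A \<subseteq> V \<times> V \<and>
     (\<forall>v. (v, v) \<notin> A) \<and> (\<forall>u v. (u, v) \<in> A \<longrightarrow> (v, u) \<notin> A)"

text \<open>Following the paper: N+(v) = {u. (u,v) is an arc}, N-(v) = {u. (v,u) is an arc}.\<close>
definition in_nbrs :: "('a \<times> 'a) set \<Rightarrow> 'a \<Rightarrow> 'a set" where
  "in_nbrs A v = {u. (u, v) \<in> A}"

definition out_nbrs :: "('a \<times> 'a) set \<Rightarrow> 'a \<Rightarrow> 'a set" where
  "out_nbrs A v = {u. (v, u) \<in> A}"

definition imb_vertex :: "('a \<times> 'a) set \<Rightarrow> 'a \<Rightarrow> int" where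
  "imb_vertex A v = int (card (in_nbrs A v)) - int (card (out_nbrs A v))"

definition imbalance :: "'a set \<Rightarrow> ('a \<times> 'a) set \<Rightarrow> int" where
  "imbalance V A = Max ((\<lambda>v. \<bar>imb_vertex A v\<bar>) ` V)"

definition wt :: "('a \<times> 'a) set \<Rightarrow> ('a \<Rightarrow> int) \<Rightarrow> 'a \<Rightarrow> int" where
  "wt A f v = (\<Sum>u\<in>in_nbrs A v. f u) - (\<Sum>u\<in>out_nbrs A v. f u)"

definition DDM_labeling :: "'a set \<Rightarrow> ('a \<times> 'a) set \<Rightarrow> ('a \<Rightarrow> int) \<Rightarrow> bool" where
  "DDM_labeling V A f \<longleftrightarrow> bij_betw f V {1..int (card V)} \<and> (\<forall>v\<in>V. wt A f v = 0)"

definition DDMOG :: "'a set \<Rightarrow> ('a \<times> 'a) set \<Rightarrow> bool" where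
  "DDMOG V A \<longleftrightarrow> oriented_graph V A \<and> (\<exists>f. DDM_labeling V A f)"

definition induced_embedding :: "('a \<Rightarrow> 'b) \<Rightarrow> 'a set \<Rightarrow> ('a \<times> 'a) set \<Rightarrow> 'b set \<Rightarrow> ('b \<times> 'b) set \<Rightarrow> bool" where
  "induced_embedding h V A V' A' \<longleftrightarrow> inj_on h V \<and> h ` V \<subseteq> V' \<and>
     (\<forall>u\<in>V. \<forall>v\<in>V. (u, v) \<in> A \<longleftrightarrow> (h u, h v) \<in> A')"

end

theory Submission
  imports Defs
begin

text \<open>Let \<open>P\<close> and \<open>M\<close> be the vertices of imbalance \<open>1\<close> and \<open>-1\<close>. Double counting over
  the arcs gives \<open>\<Sum>\<^sub>v f(v) imb(v) = - \<Sum>\<^sub>v wt\<^sub>f(v)\<close> for every labeling \<open>f\<close>; with \<open>f = 1\<close>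
  this yields \<open>|P| = |M|\<close>, and with a DDM labeling \<open>f\<close> it yields \<open>\<Sum>\<^sub>P f = \<Sum>\<^sub>M f\<close>.
  Add a new vertex \<open>x\<close> with arcs \<open>p \<rightarrow> x\<close> for \<open>p \<in> P\<close> and \<open>x \<rightarrow> m\<close> for \<open>m \<in> M\<close>, label \<open>x\<close>
  by \<open>1\<close> and every old vertex \<open>v\<close> by \<open>f(v) + 1\<close>. Every vertex becomes balanced; the shift
  changes the weight of an old vertex by \<open>imb(v)\<close>, which the new arc to or from \<open>x\<close>
  cancels, and the weight of \<open>x\<close> is \<open>\<Sum>\<^sub>P (f + 1) - \<Sum>\<^sub>M (f + 1) = 0\<close>.\<close>

lemma finite_in_nbrs: "finite A \<Longrightarrow> finite (in_nbrs A v)"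
  unfolding in_nbrs_def by (rule finite_subset[of _ "fst ` A"]) force+

lemma finite_out_nbrs: "finite A \<Longrightarrow> finite (out_nbrs A v)"
  unfolding out_nbrs_def by (rule finite_subset[of _ "snd ` A"]) force+

lemma finite_arcs: "finite V \<Longrightarrow> A \<subseteq> V \<times> V \<Longrightarrow> finite A"
  using finite_subset by blast

lemma sum_in_nbrs_eq_sum_arcs:
  assumes "finite V" "A \<subseteq> V \<times> V"
  shows "(\<Sum>v\<in>V. \<Sum>u\<in>in_nbrs A v. h u v) = (\<Sum>(u, v)\<in>A. h u v)"
proof -
  have "(\<Sum>v\<in>V. \<Sum>u\<in>in_nbrs A v. h u v) = (\<Sum>(v, u)\<in>Sigma V (in_nbrs A). h u v)"
    using assms by (intro sum.Sigma) (auto intro: finite_in_nbrs finite_arcs)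
  also have "Sigma V (in_nbrs A) = prod.swap ` A"
    using assms(2) unfolding in_nbrs_def by force
  also have "(\<Sum>(v, u)\<in>prod.swap ` A. h u v) = (\<Sum>(u, v)\<in>A. h u v)"
    by (subst sum.reindex) (auto simp: case_prod_beta)
  finally show ?thesis .
qed

lemma sum_out_nbrs_eq_sum_arcs:
  assumes "finite V" "A \<subseteq> V \<times> V"
  shows "(\<Sum>v\<in>V. \<Sum>u\<in>out_nbrs A v. h v u) = (\<Sum>(v, u)\<in>A. h v u)"
proof -
  have "(\<Sum>v\<in>V. \<Sum>u\<in>out_nbrs A v. h v u) = (\<Sum>(v, u)\<in>Sigma V (out_nbrs A). h v u)"
    using assms by (intro sum.Sigma) (auto intro: finite_out_nbrs finite_arcs)
  also have "Sigma V (out_nbrs A) = A"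
    using assms(2) unfolding out_nbrs_def by force
  finally show ?thesis .
qed

lemma sum_mult_imb_vertex_eq_uminus_sum_wt:
  assumes "finite V" "A \<subseteq> V \<times> V"
  shows "(\<Sum>v\<in>V. f v * imb_vertex A v) = - (\<Sum>v\<in>V. wt A f v)"
proof -
  let ?head = "\<Sum>(u, v)\<in>A. f v" and ?tail = "\<Sum>(u, v)\<in>A. f u"
  have "(\<Sum>v\<in>V. f v * imb_vertex A v)
      = (\<Sum>v\<in>V. \<Sum>u\<in>in_nbrs A v. f v) - (\<Sum>v\<in>V. \<Sum>u\<in>out_nbrs A v. f v)"
    unfolding imb_vertex_def by (simp add: sum_subtractf algebra_simps)
  also have "\<dots> = ?head - ?tail"
    using sum_in_nbrs_eq_sum_arcs[OF assms, of "\<lambda>u v. f v"]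
      sum_out_nbrs_eq_sum_arcs[OF assms, of "\<lambda>v u. f v"] by simp
  finally have "(\<Sum>v\<in>V. f v * imb_vertex A v) = ?head - ?tail" .
  moreover have "?tail - ?head = (\<Sum>v\<in>V. wt A f v)"
    using sum_in_nbrs_eq_sum_arcs[OF assms, of "\<lambda>u v. f u"]
      sum_out_nbrs_eq_sum_arcs[OF assms, of "\<lambda>v u. f u"]
    unfolding wt_def by (simp add: sum_subtractf)
  ultimately show ?thesis by simp
qed

lemma wt_const_one: "wt A (\<lambda>_. 1) v = imb_vertex A v"
  unfolding wt_def imb_vertex_def by simp

lemma sum_imb_vertex_eq_0:
  assumes "finite V" "A \<subseteq> V \<times> V"
  shows "(\<Sum>v\<in>V. imb_vertex A v) = 0"
  using sum_mult_imb_vertex_eq_uminus_sum_wt[OF assms, of "\<lambda>_. 1"] by (simp add: wt_const_one)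

definition pos_imb_vertices :: "'a set \<Rightarrow> ('a \<times> 'a) set \<Rightarrow> 'a set" where
  "pos_imb_vertices V A = {v\<in>V. imb_vertex A v = 1}"

definition neg_imb_vertices :: "'a set \<Rightarrow> ('a \<times> 'a) set \<Rightarrow> 'a set" where
  "neg_imb_vertices V A = {v\<in>V. imb_vertex A v = -1}"

lemma imb_vertex_eq_indicators:
  assumes "\<bar>imb_vertex A v\<bar> \<le> 1" "v \<in> V"
  shows "imb_vertex A v = of_bool (v \<in> pos_imb_vertices V A) - of_bool (v \<in> neg_imb_vertices V A)"
  using assms unfolding pos_imb_vertices_def neg_imb_vertices_def by auto

lemma sum_mult_imb_vertex_unit:
  assumes "finite V" "\<forall>v\<in>V. \<bar>imb_vertex A v\<bar> \<le> 1"
  shows "(\<Sum>v\<in>V. g v * imb_vertex A v)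
    = sum g (pos_imb_vertices V A) - sum g (neg_imb_vertices V A)"
proof -
  have "(\<Sum>v\<in>V. g v * imb_vertex A v) = (\<Sum>v\<in>V. (if v \<in> pos_imb_vertices V A then g v else 0)
      - (if v \<in> neg_imb_vertices V A then g v else 0))"
    using assms(2) unfolding pos_imb_vertices_def neg_imb_vertices_def
    by (intro sum.cong) (auto simp: abs_le_iff)
  also have "\<dots> = sum g (pos_imb_vertices V A) - sum g (neg_imb_vertices V A)"
    using assms(1) unfolding pos_imb_vertices_def neg_imb_vertices_def
    by (simp add: sum_subtractf sum.If_cases Int_def)
  finally show ?thesis .
qed

lemma card_pos_imb_vertices_eq_card_neg:
  assumes "finite V" "A \<subseteq> V \<times> V" "\<forall>v\<in>V. \<bar>imb_vertex A v\<bar> \<le> 1"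
  shows "card (pos_imb_vertices V A) = card (neg_imb_vertices V A)"
  using sum_mult_imb_vertex_unit[OF assms(1,3), of "\<lambda>_. 1"] sum_imb_vertex_eq_0[OF assms(1,2)]
  by simp

lemma sum_pos_imb_vertices_eq_sum_neg:
  assumes "finite V" "A \<subseteq> V \<times> V" "\<forall>v\<in>V. \<bar>imb_vertex A v\<bar> \<le> 1" "\<forall>v\<in>V. wt A f v = 0"
  shows "sum f (pos_imb_vertices V A) = sum f (neg_imb_vertices V A)"
  using sum_mult_imb_vertex_unit[OF assms(1,3), of f]
    sum_mult_imb_vertex_eq_uminus_sum_wt[OF assms(1,2), of f] assms(4)
  by simp

definition balancing_arcs :: "'a set \<Rightarrow> ('a \<times> 'a) set \<Rightarrow> ('a option \<times> 'a option) set" where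
  "balancing_arcs V A = map_prod Some Some ` A
     \<union> (\<lambda>v. (Some v, None)) ` pos_imb_vertices V A
     \<union> (\<lambda>v. (None, Some v)) ` neg_imb_vertices V A"

definition shift_label :: "('a \<Rightarrow> int) \<Rightarrow> 'a option \<Rightarrow> int" where
  "shift_label f = case_option 1 (\<lambda>v. f v + 1)"

lemma shift_label_simps [simp]:
  "shift_label f None = 1"
  "shift_label f (Some v) = f v + 1"
  unfolding shift_label_def by simp_all

lemma in_nbrs_balancing_arcs_Some:
  "in_nbrs (balancing_arcs V A) (Some v) = Some ` in_nbrs A v \<union>
     (if v \<in> neg_imb_vertices V A then {None} else {})"
  unfolding balancing_arcs_def in_nbrs_def by auto

lemma out_nbrs_balancing_arcs_Some:
  "out_nbrs (balancing_arcs V A) (Some v) = Some ` out_nbrs A v \<union>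
     (if v \<in> pos_imb_vertices V A then {None} else {})"
  unfolding balancing_arcs_def out_nbrs_def by auto

lemma in_nbrs_balancing_arcs_None:
  "in_nbrs (balancing_arcs V A) None = Some ` pos_imb_vertices V A"
  unfolding balancing_arcs_def in_nbrs_def by auto

lemma out_nbrs_balancing_arcs_None:
  "out_nbrs (balancing_arcs V A) None = Some ` neg_imb_vertices V A"
  unfolding balancing_arcs_def out_nbrs_def by auto

lemma oriented_graph_balancing_arcs:
  assumes "oriented_graph V A"
  shows "oriented_graph (insert None (Some ` V)) (balancing_arcs V A)"
proof -
  have "pos_imb_vertices V A \<inter> neg_imb_vertices V A = {}"
    unfolding pos_imb_vertices_def neg_imb_vertices_def by auto
  moreover have "pos_imb_vertices V A \<subseteq> V" "neg_imb_vertices V A \<subseteq> V"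
    unfolding pos_imb_vertices_def neg_imb_vertices_def by auto
  ultimately show ?thesis
    using assms unfolding oriented_graph_def balancing_arcs_def by auto
qed

lemma induced_embedding_balancing_arcs:
  "induced_embedding Some V A (insert None (Some ` V)) (balancing_arcs V A)"
  unfolding induced_embedding_def balancing_arcs_def by auto

lemma imb_vertex_balancing_arcs_Some:
  assumes "finite A" "\<bar>imb_vertex A v\<bar> \<le> 1" "v \<in> V"
  shows "imb_vertex (balancing_arcs V A) (Some v) = 0"
proof -
  have "imb_vertex (balancing_arcs V A) (Some v) = imb_vertex A v
      + of_bool (v \<in> neg_imb_vertices V A) - of_bool (v \<in> pos_imb_vertices V A)"
    unfolding imb_vertex_def in_nbrs_balancing_arcs_Some out_nbrs_balancing_arcs_Some
    using finite_in_nbrs[OF assms(1)] finite_out_nbrs[OF assms(1)] by (simp add: card_image)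
  then show ?thesis
    using imb_vertex_eq_indicators[OF assms(2,3)] by simp
qed

lemma imb_vertex_balancing_arcs_None:
  assumes "finite V" "A \<subseteq> V \<times> V" "\<forall>v\<in>V. \<bar>imb_vertex A v\<bar> \<le> 1"
  shows "imb_vertex (balancing_arcs V A) None = 0"
  unfolding imb_vertex_def in_nbrs_balancing_arcs_None out_nbrs_balancing_arcs_None
  using card_pos_imb_vertices_eq_card_neg[OF assms] by (simp add: card_image)

lemma imbalance_balancing_arcs:
  assumes "finite V" "A \<subseteq> V \<times> V" "\<forall>v\<in>V. \<bar>imb_vertex A v\<bar> \<le> 1"
  shows "imbalance (insert None (Some ` V)) (balancing_arcs V A) = 0"
proof -
  have "(\<lambda>v. \<bar>imb_vertex (balancing_arcs V A) v\<bar>) ` insert None (Some ` V) = {0}"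
    using imb_vertex_balancing_arcs_None[OF assms]
      imb_vertex_balancing_arcs_Some[OF finite_arcs[OF assms(1,2)]] assms(3)
    by auto
  then show ?thesis unfolding imbalance_def by (metis Max_singleton)
qed

lemma sum_shift_label_image_Some:
  "finite X \<Longrightarrow> sum (shift_label f) (Some ` X) = sum f X + int (card X)"
  by (simp add: sum.reindex shift_label_def sum.distrib)

lemma wt_shift_label_Some:
  assumes "finite A" "\<bar>imb_vertex A v\<bar> \<le> 1" "v \<in> V"
  shows "wt (balancing_arcs V A) (shift_label f) (Some v) = wt A f v"
proof -
  have "wt (balancing_arcs V A) (shift_label f) (Some v) = wt A f v + imb_vertex A v
      + of_bool (v \<in> neg_imb_vertices V A) - of_bool (v \<in> pos_imb_vertices V A)"
    unfolding wt_def imb_vertex_def in_nbrs_balancing_arcs_Some out_nbrs_balancing_arcs_Some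
    using finite_in_nbrs[OF assms(1)] finite_out_nbrs[OF assms(1)]
    by (simp add: sum_shift_label_image_Some)
  then show ?thesis
    using imb_vertex_eq_indicators[OF assms(2,3)] by simp
qed

lemma wt_shift_label_None:
  assumes "finite V" "A \<subseteq> V \<times> V" "\<forall>v\<in>V. \<bar>imb_vertex A v\<bar> \<le> 1" "\<forall>v\<in>V. wt A f v = 0"
  shows "wt (balancing_arcs V A) (shift_label f) None = 0"
proof -
  have "finite (pos_imb_vertices V A)" "finite (neg_imb_vertices V A)"
    using assms(1) unfolding pos_imb_vertices_def neg_imb_vertices_def by auto
  then show ?thesis
    unfolding wt_def in_nbrs_balancing_arcs_None out_nbrs_balancing_arcs_None
    using card_pos_imb_vertices_eq_card_neg[OF assms(1-3)]
      sum_pos_imb_vertices_eq_sum_neg[OF assms]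
    by (simp add: sum_shift_label_image_Some)
qed

lemma bij_betw_shift_label:
  assumes "bij_betw f V {1..int (card V)}"
  shows "bij_betw (shift_label f) (insert None (Some ` V)) {1..int (card V + 1)}"
proof -
  have "bij_betw (\<lambda>x. x + 1) {1..int (card V)} {2..int (card V) + 1}"
    by (auto simp: bij_betw_def image_add_atLeastAtMost')
  then have "bij_betw (\<lambda>v. f v + 1) V {2..int (card V) + 1}"
    using bij_betw_trans[OF assms] by (simp add: comp_def)
  then have "bij_betw (shift_label f) (Some ` V) {2..int (card V) + 1}"
    by (simp add: bij_betw_def inj_on_def image_image)
  moreover have "{1..int (card V + 1)} = insert 1 {2..int (card V) + 1}" by auto
  ultimately show ?thesis
    using notIn_Un_bij_betw[of None "Some ` V" "shift_label f"] by simp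
qed

lemma DDM_labeling_shift_label:
  assumes "A \<subseteq> V \<times> V" "\<forall>v\<in>V. \<bar>imb_vertex A v\<bar> \<le> 1" "DDM_labeling V A f" "finite V"
  shows "DDM_labeling (insert None (Some ` V)) (balancing_arcs V A) (shift_label f)"
proof -
  have "card (insert None (Some ` V)) = card V + 1"
    using assms(4) by (simp add: card_image)
  moreover have "bij_betw (shift_label f) (insert None (Some ` V)) {1..int (card V + 1)}"
    using assms(3) bij_betw_shift_label unfolding DDM_labeling_def by blast
  ultimately show ?thesis
    using assms wt_shift_label_Some[OF finite_arcs[OF assms(4,1)]]
      wt_shift_label_None[OF assms(4,1,2)]
    unfolding DDM_labeling_def by auto
qed

theorem theorem1:
  fixes V :: "'a set" and A :: "('a \<times> 'a) set" and n :: nat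
  assumes "DDMOG V A" and "card V = n" and "imbalance V A = 1"
  shows "\<exists>(V' :: 'a option set) A' h. DDMOG V' A' \<and> card V' = n + 1 \<and>
           imbalance V' A' = 0 \<and> induced_embedding h V A V' A'"
proof -
  obtain f where og: "oriented_graph V A" and f: "DDM_labeling V A f"
    using assms(1) unfolding DDMOG_def by blast
  then have finV: "finite V" and AV: "A \<subseteq> V \<times> V"
    unfolding oriented_graph_def by auto
  have imb_le: "\<forall>v\<in>V. \<bar>imb_vertex A v\<bar> \<le> 1"
    using assms(3) finV unfolding imbalance_def by (metis Max_ge finite_imageI imageI)
  let ?V' = "insert None (Some ` V)" and ?A' = "balancing_arcs V A"
  have "DDMOG ?V' ?A'"
    using oriented_graph_balancing_arcs[OF og] DDM_labeling_shift_label[OF AV imb_le f finV]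
    unfolding DDMOG_def by blast
  moreover have "card ?V' = n + 1"
    using finV assms(2) by (simp add: card_image)
  ultimately show ?thesis
    using imbalance_balancing_arcs[OF finV AV imb_le] induced_embedding_balancing_arcs by blast
qed

end
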